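(* Let $G=(V,E)$ be a graph and let $B_1,\dots,B_m$ be bicliques whose edge sets partition $E$, with fixed orientations $B_i=L_i\times R_i$ ($L_i,R_i\subseteq V$ disjoint, the edges of $B_i$ being all $\{u,v\}$ with $u\in L_i$, $v\in R_i$). For $i\in[m]$ define $h_i:V\to\{0,1,\star\}$ by $h_i(v)=0$ if $v\in L_i$, $h_i(v)=1$ if $v\in R_i$, and $h_i(v)=\star$ otherwise, and let $\mathbb{G}=\{h_1,\dots,h_m\}\subseteq\{0,1,\star\}^V$. Then $\mathrm{LD}(\mathbb{G})\le 2$.
   Context: Littlestone dimension of a partial class $\mathbb{H}\subseteq\{0,1,\star\}^{\mathcal{X}}$: the largest $d$ such that there is a full binary tree of height $d$ with internal nodes $v\in\bigcup_{k<d}\{0,1\}^k$ labelled by points $x_v\in\mathcal{X}$, such that for every $y\in\{0,1\}^d$ some $h\in\mathbb{H}$ satisfies $h(x_{y_1\cdots y_{i-1}})=y_i$ for all $i\in[d]$. *)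

theory Defs
  imports "HOL-Library.Extended_Nat"
begin

datatype pval = Zero | One | Star

definition bit_val :: "bool \<Rightarrow> pval" where
  "bit_val b = (if b then One else Zero)"

text \<open>A Littlestone tree of height d over domain X: internal nodes are the
  bit strings (lists) of length < d, labelled by points of X via x.\<close>
definition ltree_shattered ::
  "'a set \<Rightarrow> ('a \<Rightarrow> pval) set \<Rightarrow> nat \<Rightarrow> (bool list \<Rightarrow> 'a) \<Rightarrow> bool" where
  "ltree_shattered X H d x \<longleftrightarrow>
     (\<forall>v. length v < d \<longrightarrow> x v \<in> X) \<and>
     (\<forall>y. length y = d \<longrightarrow>
        (\<exists>h\<in>H. \<forall>i<d. h (x (take i y)) = bit_val (y ! i)))"

definition littlestone_dim :: "'a set \<Rightarrow> ('a \<Rightarrow> pval) set \<Rightarrow> enat" where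
  "littlestone_dim X H = Sup {enat d | d. \<exists>x. ltree_shattered X H d x}"

definition is_graph :: "'a set \<Rightarrow> 'a set set \<Rightarrow> bool" where
  "is_graph V E \<longleftrightarrow> (\<forall>e\<in>E. \<exists>u v. u \<in> V \<and> v \<in> V \<and> u \<noteq> v \<and> e = {u, v})"

definition biclique_edges :: "'a set \<Rightarrow> 'a set \<Rightarrow> 'a set set" where
  "biclique_edges L R = {{u, v} | u v. u \<in> L \<and> v \<in> R}"

definition biclique_concept :: "'a set \<Rightarrow> 'a set \<Rightarrow> 'a \<Rightarrow> pval" where
  "biclique_concept L R v = (if v \<in> L then Zero else if v \<in> R then One else Star)"

end

theory Submission
  imports Defs
begin

text \<open>Along the branches 010\<dots> and 011\<dots> of a tree of height 3, the concepts
  realising them both send the root to 0 and its left child to 1, yet disagree at the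
  third node. For biclique concepts the first two values place the edge between these
  two points in both bicliques, so by edge-disjointness the concepts coincide.\<close>

lemma littlestone_dim_le_enat:
  assumes "\<And>d x. ltree_shattered X H d x \<Longrightarrow> d \<le> n"
  shows "littlestone_dim X H \<le> enat n"
  unfolding littlestone_dim_def by (rule Sup_least) (auto dest: assms)

lemma ltree_shattered_height_le_2:
  assumes unique: "\<And>h h' a b. h \<in> H \<Longrightarrow> h' \<in> H \<Longrightarrow> h a = Zero \<Longrightarrow> h b = One \<Longrightarrow>
                     h' a = Zero \<Longrightarrow> h' b = One \<Longrightarrow> h = h'"
    and shattered: "ltree_shattered X H d x"
  shows "d \<le> 2"
proof (rule ccontr)
  assume "\<not> d \<le> 2"
  then have d: "d \<ge> 3" by simp
  define branch where "branch b = [False, True, b] @ replicate (d - 3) False" for b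
  have "length (branch b) = d" for b
    using d by (simp add: branch_def)
  then have "\<exists>g. g \<in> H \<and> (\<forall>k<d. g (x (take k (branch b))) = bit_val (branch b ! k))" for b
    using shattered unfolding ltree_shattered_def by blast
  then obtain h where h: "\<And>b. h b \<in> H"
    and realises: "\<And>b k. k < d \<Longrightarrow> h b (x (take k (branch b))) = bit_val (branch b ! k)"
    by metis
  have "h b (x []) = Zero" "h b (x [False]) = One" "h b (x [False, True]) = bit_val b" for b
    using realises[of 0 b] realises[of 1 b] realises[of 2 b] d
    by (simp_all add: branch_def bit_val_def numeral_2_eq_2)
  then have "h False = h True"
    using unique h by metis
  then show False
    using \<open>h False (x [False, True]) = bit_val False\<close> \<open>h True (x [False, True]) = bit_val True\<close>
    by (simp add: bit_val_def)
qed

lemma littlestone_dim_le_2: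
  assumes "\<And>h h' a b. h \<in> H \<Longrightarrow> h' \<in> H \<Longrightarrow> h a = Zero \<Longrightarrow> h b = One \<Longrightarrow>
             h' a = Zero \<Longrightarrow> h' b = One \<Longrightarrow> h = h'"
  shows "littlestone_dim X H \<le> 2"
  using littlestone_dim_le_enat[of X H 2] ltree_shattered_height_le_2[OF assms]
  by (simp add: numeral_eq_enat)

lemma biclique_concept_Zero_One_edge:
  assumes "biclique_concept L R a = Zero" and "biclique_concept L R b = One"
  shows "{a, b} \<in> biclique_edges L R"
  using assms unfolding biclique_concept_def biclique_edges_def
  by (auto split: if_splits)

theorem claim3p1:
  fixes V :: "'a set" and E :: "'a set set" and m :: nat
    and L R :: "nat \<Rightarrow> 'a set"
  assumes graph: "is_graph V E"
    and sub: "\<And>i. i < m \<Longrightarrow> L i \<subseteq> V \<and> R i \<subseteq> V"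
    and disj: "\<And>i. i < m \<Longrightarrow> L i \<inter> R i = {}"
    and nonempty: "\<And>i. i < m \<Longrightarrow> L i \<noteq> {} \<and> R i \<noteq> {}"
    and cover: "(\<Union>i<m. biclique_edges (L i) (R i)) = E"
    and pairwise: "\<And>i j. i < m \<Longrightarrow> j < m \<Longrightarrow> i \<noteq> j \<Longrightarrow>
                    biclique_edges (L i) (R i) \<inter> biclique_edges (L j) (R j) = {}"
  shows "littlestone_dim V ((\<lambda>i. biclique_concept (L i) (R i)) ` {..<m}) \<le> 2"
proof (rule littlestone_dim_le_2, clarify)
  fix i j a b
  assume "i < m" "j < m"
    and "biclique_concept (L i) (R i) a = Zero" "biclique_concept (L i) (R i) b = One"
    and "biclique_concept (L j) (R j) a = Zero" "biclique_concept (L j) (R j) b = One"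
  then have "{a, b} \<in> biclique_edges (L i) (R i) \<inter> biclique_edges (L j) (R j)"
    by (blast intro: biclique_concept_Zero_One_edge)
  then have "i = j"
    using pairwise \<open>i < m\<close> \<open>j < m\<close> by blast
  then show "biclique_concept (L i) (R i) = biclique_concept (L j) (R j)"
    by simp
qed

end
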